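(* Let $q$ be a prime power, let $\mathbf{C}\subseteq\mathbf{F}_q^n$ be a projective linear $[n,k]_q$ code with maximum weight $w$, and let $h$ be a positive integer with $h>\log_q w-k+2$. Let $\mathbf{C}_1$ be the simplex complementary code of $\mathbf{C}$ of dimension $k+h$, which is a $[\frac{q^{k+h}-1}{q-1}-n,\ k+h,\ q^{k+h-1}-w]_q$ code with maximum weight $q^{k+h-1}$, and set $n'=\lceil\frac{q(q^{k+h-1}-w)}{q-1}\rceil-q^{k+h-1}$. Then the code $\mathbf{C}'$ obtained from $\mathbf{C}_1$ by the extension construction is a minimal linear code with parameters $[\frac{q^{k+h}-1}{q-1}-n+n',\ k+h,\ q^{k+h-1}-w]_q$ and maximum weight $q^{k+h-1}+n'$, and it violates the Ashikhmin–Barg condition.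
   Context: Projective code: the columns of a generator matrix are nonzero and pairwise linearly independent. Simplex complementary code of dimension $K=k+h$: append $h$ zeros to the columns $\mathbf{g}_1,\dots,\mathbf{g}_n$ of a generator matrix of $\mathbf{C}$, choose a set $P$ of representatives of all one-dimensional subspaces of $\mathbf{F}_q^K$ containing these vectors, and take the code generated by the matrix whose columns are $P\setminus\{\mathbf{g}_1,\dots,\mathbf{g}_n\}$. Extension construction: for a linear $[N,K]_q$ code $\mathbf{D}$ with $K\ge 2$, minimum weight $w_{min}$, maximum weight $w_{max}$ and $n'=\lceil\frac{qw_{min}}{q-1}\rceil-w_{max}\ge 1$, choose a basis $\mathbf{r}_1,\dots,\mathbf{r}_K$ of $\mathbf{D}$ with $wt(\mathbf{r}_1)=w_{max}$, $wt(\mathbf{r}_2)=w_{min}$, and $\mathbf{a}\in(\mathbf{F}_q^* )^{n'}$; the extended code is generated by $(\mathbf{a},\mathbf{r}_1),(\mathbf{0},\mathbf{r}_2),\dots,(\mathbf{0},\mathbf{r}_K)$ in $\mathbf{F}_q^{n'+N}$. A code is minimal if any two nonzero codewords with nested supports are scalar multiples of each other. Ashikhmin–Barg condition: $w_{min}/w_{max}>(q-1)/q$. *)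

theory Defs
  imports Complex_Main "HOL-Library.Function_Algebras"
begin

text \<open>Vectors of F_q^N are modelled as functions nat => 'a vanishing outside {..<N}.\<close>

definition scl :: "'a::field \<Rightarrow> (nat \<Rightarrow> 'a) \<Rightarrow> nat \<Rightarrow> 'a" where
  "scl c v = (\<lambda>i. c * v i)"

interpretation fv: vector_space "scl :: 'a::field \<Rightarrow> (nat \<Rightarrow> 'a) \<Rightarrow> nat \<Rightarrow> 'a"
  by unfold_locales (auto simp: scl_def algebra_simps fun_eq_iff)

definition Fn :: "nat \<Rightarrow> (nat \<Rightarrow> 'a::zero) set" where
  "Fn N = {v. \<forall>i\<ge>N. v i = 0}"

definition wt :: "(nat \<Rightarrow> 'a::zero) \<Rightarrow> nat" where
  "wt v = card {i. v i \<noteq> 0}"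

definition minwt :: "(nat \<Rightarrow> 'a::zero) set \<Rightarrow> nat" where
  "minwt C = Min (wt ` (C - {0}))"

definition maxwt :: "(nat \<Rightarrow> 'a::zero) set \<Rightarrow> nat" where
  "maxwt C = Max (wt ` (C - {0}))"

definition gen_code :: "nat \<Rightarrow> (nat \<Rightarrow> nat \<Rightarrow> 'a::field) \<Rightarrow> nat \<Rightarrow> (nat \<Rightarrow> 'a) set" where
  "gen_code m col K = {(\<lambda>j. if j < m then (\<Sum>i<K. x i * col j i) else 0) | x. x \<in> Fn K}"

text \<open>col 0..col (m-1) are the columns of a generator matrix (of full row rank k) of an [m,k] code.\<close>
definition is_gen_matrix :: "nat \<Rightarrow> (nat \<Rightarrow> nat \<Rightarrow> 'a::field) \<Rightarrow> nat \<Rightarrow> bool" where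
  "is_gen_matrix m col k \<longleftrightarrow> (\<forall>j<m. col j \<in> Fn k) \<and> fv.span (col ` {..<m}) = Fn k"

definition projective :: "nat \<Rightarrow> (nat \<Rightarrow> nat \<Rightarrow> 'a::field) \<Rightarrow> bool" where
  "projective m col \<longleftrightarrow> (\<forall>j<m. col j \<noteq> 0) \<and>
     (\<forall>i<m. \<forall>j<m. i \<noteq> j \<longrightarrow> fv.independent {col i, col j} \<and> col i \<noteq> col j)"

definition proj_reps :: "nat \<Rightarrow> (nat \<Rightarrow> 'a::field) set \<Rightarrow> bool" where
  "proj_reps K P \<longleftrightarrow> P \<subseteq> Fn K - {0} \<and> (\<forall>v \<in> Fn K - {0}. \<exists>!p \<in> P. \<exists>c. v = scl c p)"

text \<open>ps 0 .. ps (N-1) enumerate the columns P minus {g_1..g_n} of a generator matrix of the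
  simplex complementary code of dimension K (g_j already vanish beyond k, i.e. have h zeros appended).\<close>
definition simplex_compl_cols :: "nat \<Rightarrow> (nat \<Rightarrow> nat \<Rightarrow> 'a::field) \<Rightarrow> nat \<Rightarrow> nat \<Rightarrow> (nat \<Rightarrow> nat \<Rightarrow> 'a) \<Rightarrow> bool" where
  "simplex_compl_cols n g K N ps \<longleftrightarrow>
     (\<exists>P. proj_reps K P \<and> g ` {..<n} \<subseteq> P \<and> bij_betw ps {..<N} (P - g ` {..<n}))"

definition cat :: "nat \<Rightarrow> (nat \<Rightarrow> 'a) \<Rightarrow> (nat \<Rightarrow> 'a) \<Rightarrow> nat \<Rightarrow> 'a" where
  "cat m a r = (\<lambda>j. if j < m then a j else r (j - m))"

definition row_code :: "nat \<Rightarrow> (nat \<Rightarrow> nat \<Rightarrow> 'a::field) \<Rightarrow> (nat \<Rightarrow> 'a) set" where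
  "row_code K rows = {(\<lambda>j. \<Sum>i<K. x i * rows i j) | x. True}"

text \<open>r 0 = r_1, ..., r (K-1) = r_K is a basis of D with wt r_1 = w_max, wt r_2 = w_min.\<close>
definition ext_basis :: "(nat \<Rightarrow> 'a::field) set \<Rightarrow> nat \<Rightarrow> (nat \<Rightarrow> nat \<Rightarrow> 'a) \<Rightarrow> bool" where
  "ext_basis D K r \<longleftrightarrow> inj_on r {..<K} \<and> fv.independent (r ` {..<K}) \<and>
     fv.span (r ` {..<K}) = D \<and> wt (r 0) = maxwt D \<and> wt (r 1) = minwt D"

definition extension_code :: "nat \<Rightarrow> (nat \<Rightarrow> 'a::field) \<Rightarrow> (nat \<Rightarrow> nat \<Rightarrow> 'a) \<Rightarrow> nat \<Rightarrow> (nat \<Rightarrow> 'a) set" where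
  "extension_code n' a r K =
     row_code K (\<lambda>i. if i = 0 then cat n' a (r 0) else cat n' 0 (r i))"

definition minimal_code :: "(nat \<Rightarrow> 'a::field) set \<Rightarrow> bool" where
  "minimal_code C \<longleftrightarrow> (\<forall>c\<in>C - {0}. \<forall>c'\<in>C - {0}.
      {i. c' i \<noteq> 0} \<subseteq> {i. c i \<noteq> 0} \<longrightarrow> (\<exists>t. c' = scl t c))"

end

theory Submission
  imports Defs "HOL-Library.Cardinality" "HOL-Library.FuncSet"
begin

(* Every nonzero linear form x on F_q^K is nonzero on exactly q^(K-1) of the representatives P
  of the points of PG(K-1, q). The codeword of the simplex complementary code C1 belonging to x
  counts these representatives outside {g_1, ..., g_n}, so its weight is q^(K-1) minus the weight
  of the codeword of C belonging to x. Hence the weights of C1 range exactly from q^(K-1) - w to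
  q^(K-1), and the bound on h, i.e. q w < q^(K-1), is the Ashikhmin-Barg condition for C1, which
  makes C1 minimal (a double counting over the nonzero scalars l of the weights of c - l c').
  A codeword of the extended code C' is (x_1 a, c) with c in C1 determining x, so supports in C'
  are nested only if they are nested in C1, and the weights of C' range from q^(K-1) - w to
  q^(K-1) + n'. Finally n' is chosen such that q^(K-1) + n' is the ceiling of
  q (q^(K-1) - w) / (q - 1), which is exactly what breaks the Ashikhmin-Barg condition. *)

lemma two_le_card_field: "2 \<le> CARD('a::{field,finite})"
proof -
  have "card {0, 1::'a} \<le> CARD('a)" by (rule card_mono) auto
  then show ?thesis by simp
qed

lemma Fn_eq_image_PiE: "Fn K = (\<lambda>f i. if i < K then f i else 0) ` ({..<K} \<rightarrow>\<^sub>E UNIV)"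
proof safe
  fix v :: "nat \<Rightarrow> 'a" assume "v \<in> Fn K"
  then show "v \<in> (\<lambda>f i. if i < K then f i else 0) ` ({..<K} \<rightarrow>\<^sub>E UNIV)"
    by (intro image_eqI[where x = "restrict v {..<K}"]) (auto simp: Fn_def fun_eq_iff)
qed (auto simp: Fn_def)

lemma finite_Fn [simp]: "finite (Fn K :: (nat \<Rightarrow> 'a::{zero,finite}) set)"
  by (simp add: Fn_eq_image_PiE finite_PiE)

lemma card_Fn: "card (Fn K :: (nat \<Rightarrow> 'a::{zero,finite}) set) = CARD('a) ^ K"
proof -
  have "inj_on (\<lambda>f i. if i < K then f i else (0::'a)) ({..<K} \<rightarrow>\<^sub>E UNIV)"
    by (auto simp: inj_on_def fun_eq_iff PiE_def extensional_def) (metis)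
  then show ?thesis
    by (simp add: Fn_eq_image_PiE card_image card_PiE)
qed

lemma zero_in_Fn [simp]: "0 \<in> Fn K"
  by (simp add: Fn_def)

lemma Fn_mono: "k \<le> K \<Longrightarrow> Fn k \<subseteq> Fn K"
  by (auto simp: Fn_def)

lemma finite_support_Fn: "v \<in> Fn N \<Longrightarrow> finite {i. v i \<noteq> 0}"
  by (rule finite_subset[of _ "{..<N}"]) (auto simp: Fn_def not_less[symmetric])

lemma nonzero_coord_Fn:
  assumes "v \<in> Fn K" "v \<noteq> 0"
  obtains i where "i < K" "v i \<noteq> 0"
  using assms by (auto simp: Fn_def fun_eq_iff not_less[symmetric])

definition dotp :: "nat \<Rightarrow> (nat \<Rightarrow> 'a::field) \<Rightarrow> (nat \<Rightarrow> 'a) \<Rightarrow> 'a" where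
  "dotp K x v = (\<Sum>i<K. x i * v i)"

lemma dotp_scl_right: "dotp K x (scl c v) = c * dotp K x v"
  by (simp add: dotp_def scl_def sum_distrib_left algebra_simps)

definition unit_vec :: "nat \<Rightarrow> nat \<Rightarrow> 'a::zero_neq_one" where
  "unit_vec i = (\<lambda>j. if j = i then 1 else 0)"

lemma unit_vec_apply [simp]: "unit_vec i j = (if j = i then 1 else 0)"
  by (simp add: unit_vec_def)

lemma unit_vec_in_Fn: "i < K \<Longrightarrow> unit_vec i \<in> Fn K"
  by (simp add: Fn_def)

lemma unit_vec_nonzero [simp]: "unit_vec i \<noteq> 0"
  by (simp add: unit_vec_def fun_eq_iff)

lemma dotp_unit_vec:
  assumes "i < K"
  shows "dotp K (unit_vec i) v = v i"
proof -
  have "dotp K (unit_vec i) v = (\<Sum>j<K. if j = i then v j else 0)"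
    unfolding dotp_def by (intro sum.cong) auto
  with assms show ?thesis by simp
qed

lemma card_hyperplane:
  fixes x :: "nat \<Rightarrow> 'a::{field,finite}"
  assumes x: "x \<in> Fn K" "x \<noteq> 0"
  shows "card {v \<in> Fn K. dotp K x v = 0} = CARD('a) ^ (K - 1)"
proof -
  obtain i0 where i0: "i0 < K" "x i0 \<noteq> 0" using x by (rule nonzero_coord_Fn)
  define shift where "shift v c = v(i0 := v i0 + c / x i0)" for v and c :: 'a
  have dotp_shift: "dotp K x (shift v c) = dotp K x v + c" for v c
  proof -
    have "dotp K x (shift v c) = (\<Sum>i<K. x i * v i + (if i = i0 then c else 0))"
      unfolding dotp_def shift_def using i0 by (intro sum.cong) (auto simp: algebra_simps)
    then show ?thesis using i0 by (simp add: sum.distrib dotp_def)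
  qed
  have shift_shift: "shift (shift v c) d = shift v (c + d)" for v c d
    by (simp add: shift_def add_divide_distrib add.assoc)
  have shift_Fn: "v \<in> Fn K \<Longrightarrow> shift v c \<in> Fn K" for v c
    using i0 by (simp add: shift_def Fn_def)
  have "bij_betw (\<lambda>(v, c). shift v c) ({v \<in> Fn K. dotp K x v = 0} \<times> UNIV) (Fn K)"
    by (rule bij_betw_byWitness[where f' = "\<lambda>w. (shift w (- dotp K x w), dotp K x w)"])
      (auto simp: dotp_shift shift_shift shift_Fn, simp_all add: shift_def)
  from bij_betw_same_card[OF this]
  have "card {v \<in> Fn K. dotp K x v = 0} * CARD('a) = CARD('a) ^ Suc (K - 1)"
    using i0 by (simp add: card_cartesian_product card_Fn)
  then show ?thesis by simp
qed

lemma card_proj_reps_filter: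
  fixes P :: "(nat \<Rightarrow> 'a::{field,finite}) set"
  assumes reps: "proj_reps K P" and scale_inv: "\<And>c v. c \<noteq> 0 \<Longrightarrow> Q (scl c v) = Q v"
  shows "card {v \<in> Fn K - {0}. Q v} = card {p \<in> P. Q p} * (CARD('a) - 1)"
proof -
  have P_sub: "P \<subseteq> Fn K - {0}" and unique: "\<And>v. v \<in> Fn K - {0} \<Longrightarrow> \<exists>!p\<in>P. \<exists>c. v = scl c p"
    using reps by (auto simp: proj_reps_def)
  have scl_in: "scl c p \<in> Fn K - {0}" if "p \<in> P" "c \<noteq> 0" for p c
    using that P_sub by (auto simp: Fn_def scl_def fun_eq_iff)
  have "bij_betw (\<lambda>(p, c). scl c p) ({p \<in> P. Q p} \<times> (UNIV - {0})) {v \<in> Fn K - {0}. Q v}"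
  proof (rule bij_betw_imageI)
    have "p = p' \<and> c = c'"
      if p: "p \<in> P" "c \<noteq> 0" and p': "p' \<in> P" "c' \<noteq> 0" and eq: "scl c p = scl c' p'"
      for p c p' c'
    proof -
      have "p' = p" using unique[OF scl_in[OF p]] p p' eq by metis
      moreover have "p \<noteq> 0" using p P_sub by blast
      then obtain i where "p i \<noteq> 0" by (auto simp: fun_eq_iff)
      ultimately show ?thesis using eq by (auto simp: scl_def fun_eq_iff)
    qed
    then show "inj_on (\<lambda>(p, c). scl c p) ({p \<in> P. Q p} \<times> (UNIV - {0}))"
      by (auto simp: inj_on_def)
    show "(\<lambda>(p, c). scl c p) ` ({p \<in> P. Q p} \<times> (UNIV - {0})) = {v \<in> Fn K - {0}. Q v}"
    proof (intro equalityI subsetI)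
      fix v assume v: "v \<in> {v \<in> Fn K - {0}. Q v}"
      then obtain p c where "p \<in> P" "v = scl c p" using unique by blast
      moreover have "c \<noteq> 0" using v \<open>v = scl c p\<close> by (auto simp: scl_def fun_eq_iff)
      ultimately show "v \<in> (\<lambda>(p, c). scl c p) ` ({p \<in> P. Q p} \<times> (UNIV - {0}))"
        using v scale_inv by (auto intro!: image_eqI[where x = "(p, c)"])
    qed (use scl_in scale_inv in auto)
  qed
  then show ?thesis
    by (simp add: bij_betw_same_card[symmetric] card_cartesian_product card_Diff_singleton)
qed

lemma card_proj_reps:
  fixes P :: "(nat \<Rightarrow> 'a::{field,finite}) set"
  assumes "proj_reps K P"
  shows "card P * (CARD('a) - 1) = CARD('a) ^ K - 1"
proof -
  have "card {v \<in> Fn K - {0 :: nat \<Rightarrow> 'a}. True} = card {p \<in> P. True} * (CARD('a) - 1)"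
    by (rule card_proj_reps_filter[OF assms]) simp
  then have "card (Fn K - {0 :: nat \<Rightarrow> 'a}) = card P * (CARD('a) - 1)"
    by (simp only: simp_thms Collect_mem_eq)
  then show ?thesis by (simp add: card_Diff_singleton card_Fn)
qed

lemma card_proj_reps_dotp_nonzero:
  fixes P :: "(nat \<Rightarrow> 'a::{field,finite}) set"
  assumes reps: "proj_reps K P" and x: "x \<in> Fn K" "x \<noteq> 0"
  shows "card {p \<in> P. dotp K x p \<noteq> 0} = CARD('a) ^ (K - 1)"
proof -
  obtain i0 where "i0 < K" using x by (rule nonzero_coord_Fn)
  then have q_pow: "CARD('a) ^ K = CARD('a) * CARD('a) ^ (K - 1)"
    by (simp flip: power_Suc)
  have "{v \<in> Fn K - {0}. dotp K x v \<noteq> 0} = Fn K - {v \<in> Fn K. dotp K x v = 0}"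
    by (auto simp: dotp_def)
  then have "card {v \<in> Fn K - {0}. dotp K x v \<noteq> 0} = CARD('a) ^ (K - 1) * (CARD('a) - 1)"
    using card_hyperplane[OF x] by (simp add: card_Diff_subset card_Fn q_pow algebra_simps)
  moreover have "card {v \<in> Fn K - {0}. dotp K x v \<noteq> 0} = card {p \<in> P. dotp K x p \<noteq> 0} * (CARD('a) - 1)"
    using card_proj_reps_filter[OF reps] by (simp add: dotp_scl_right)
  ultimately show ?thesis
    using two_le_card_field[where 'a = 'a] by simp
qed

definition encode :: "nat \<Rightarrow> (nat \<Rightarrow> nat \<Rightarrow> 'a::field) \<Rightarrow> nat \<Rightarrow> (nat \<Rightarrow> 'a) \<Rightarrow> nat \<Rightarrow> 'a" where
  "encode m col K x = (\<lambda>j. if j < m then dotp K x (col j) else 0)"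

lemma gen_code_eq_image: "gen_code m col K = encode m col K ` Fn K"
  unfolding gen_code_def encode_def dotp_def by blast

lemma encode_in_gen_code: "encode m col K x \<in> gen_code m col K"
proof -
  have "encode m col K x = encode m col K (\<lambda>i. if i < K then x i else 0)"
    by (auto simp: encode_def dotp_def fun_eq_iff intro!: sum.cong)
  then show ?thesis by (auto simp: gen_code_eq_image Fn_def)
qed

lemma encode_zero [simp]: "encode m col K 0 = 0"
  by (simp add: encode_def dotp_def fun_eq_iff)

lemma gen_code_subset_Fn: "gen_code m col K \<subseteq> Fn m"
  by (auto simp: gen_code_def Fn_def)

lemma finite_gen_code [simp]: "finite (gen_code m col K :: (nat \<Rightarrow> 'a::{field,finite}) set)"
  by (simp add: gen_code_eq_image)

lemma encode_truncate:
  assumes "\<forall>j<m. col j \<in> Fn k" "k \<le> K"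
  shows "encode m col K x = encode m col k x"
proof -
  have "dotp K x (col j) = dotp k x (col j)" if "j < m" for j
    unfolding dotp_def
    by (rule sum.mono_neutral_right) (use assms that in \<open>auto simp: Fn_def\<close>)
  then show ?thesis by (simp add: encode_def fun_eq_iff)
qed

lemma wt_encode:
  assumes "inj_on col {..<m}"
  shows "wt (encode m col K x) = card {p \<in> col ` {..<m}. dotp K x p \<noteq> 0}"
proof -
  have "{j. encode m col K x j \<noteq> 0} = {j \<in> {..<m}. dotp K x (col j) \<noteq> 0}"
    by (auto simp: encode_def)
  moreover have "col ` {j \<in> {..<m}. dotp K x (col j) \<noteq> 0} = {p \<in> col ` {..<m}. dotp K x p \<noteq> 0}"
    by auto
  ultimately show ?thesis
    unfolding wt_def using assms by (metis (no_types, lifting) card_image inj_on_subset mem_Collect_eq subsetI)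
qed

lemma wt_zero [simp]: "wt 0 = 0"
  by (simp add: wt_def)

lemma wt_le_maxwt: "finite C \<Longrightarrow> c \<in> C \<Longrightarrow> wt c \<le> maxwt C"
  by (cases "c = 0") (simp_all add: maxwt_def)

lemma minwt_le_wt: "finite C \<Longrightarrow> c \<in> C - {0} \<Longrightarrow> minwt C \<le> wt c"
  by (simp add: minwt_def)

lemma maxwt_attained:
  assumes "finite C" "C - {0} \<noteq> {}"
  obtains c where "c \<in> C - {0}" "wt c = maxwt C"
proof -
  have "maxwt C \<in> wt ` (C - {0})"
    unfolding maxwt_def using assms by (intro Max_in) simp_all
  then obtain c where "c \<in> C - {0}" "maxwt C = wt c" by (rule imageE)
  then show ?thesis using that by simp
qed

lemma minwt_maxwt_eqI:
  assumes bounds: "\<And>c. c \<in> C - {0} \<Longrightarrow> m \<le> wt c \<and> wt c \<le> M"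
    and "c\<^sub>1 \<in> C - {0}" "wt c\<^sub>1 = m" and "c\<^sub>2 \<in> C - {0}" "wt c\<^sub>2 = M"
  shows "minwt C = m" and "maxwt C = M"
proof -
  have fin: "finite (wt ` (C - {0}))"
    by (rule finite_subset[of _ "{..M}"]) (use bounds in auto)
  show "minwt C = m" unfolding minwt_def
    by (rule Min_eqI[OF fin]) (use assms in \<open>auto intro!: image_eqI\<close>)
  show "maxwt C = M" unfolding maxwt_def
    by (rule Max_eqI[OF fin]) (use assms in \<open>auto intro!: image_eqI\<close>)
qed

lemma projective_inj: "projective n g \<Longrightarrow> inj_on g {..<n}"
  unfolding projective_def by (intro inj_onI) (simp, meson)

lemma encode_unit_vec_beyond: "K \<le> i \<Longrightarrow> encode m col K (unit_vec i) = 0"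
  by (simp add: encode_def dotp_def fun_eq_iff)

lemma gen_code_has_nonzero:
  assumes "j < m" "col j \<in> Fn k" "col j \<noteq> 0"
  shows "gen_code m col k - {0} \<noteq> {}"
proof -
  obtain i where i: "i < k" "col j i \<noteq> 0" using assms(2,3) by (rule nonzero_coord_Fn)
  then have "encode m col k (unit_vec i) j \<noteq> 0"
    using assms(1) by (simp add: encode_def dotp_unit_vec)
  then have "encode m col k (unit_vec i) \<noteq> 0" by auto
  then show ?thesis using encode_in_gen_code by blast
qed

lemma simplex_compl_length:
  fixes g ps :: "nat \<Rightarrow> nat \<Rightarrow> 'a::{field,finite}"
  assumes "simplex_compl_cols n g K N ps" "inj_on g {..<n}"
  shows "N = (CARD('a) ^ K - 1) div (CARD('a) - 1) - n"
proof -
  obtain P where reps: "proj_reps K P" and G: "g ` {..<n} \<subseteq> P"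
    and ps: "bij_betw ps {..<N} (P - g ` {..<n})"
    using assms(1) unfolding simplex_compl_cols_def by blast
  have "N = card (P - g ` {..<n})"
    using bij_betw_same_card[OF ps] by simp
  also have "\<dots> = card P - n"
    using G assms(2) by (simp add: card_Diff_subset card_image)
  also have "card P = card P * (CARD('a) - 1) div (CARD('a) - 1)"
    using two_le_card_field[where 'a = 'a] by simp
  finally show ?thesis
    unfolding card_proj_reps[OF reps] .
qed

lemma wt_simplex_compl:
  fixes g ps :: "nat \<Rightarrow> nat \<Rightarrow> 'a::{field,finite}"
  assumes "simplex_compl_cols n g K N ps" "inj_on g {..<n}" and x: "x \<in> Fn K" "x \<noteq> 0"
  shows "wt (encode N ps K x) + wt (encode n g K x) = CARD('a) ^ (K - 1)"
proof -
  obtain P where reps: "proj_reps K P" and G: "g ` {..<n} \<subseteq> P"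
    and ps: "bij_betw ps {..<N} (P - g ` {..<n})"
    using assms(1) unfolding simplex_compl_cols_def by blast
  have fin: "finite P"
    using reps finite_Fn by (metis finite_Diff finite_subset proj_reps_def)
  have "card {p \<in> P. dotp K x p \<noteq> 0} =
      card ({p \<in> P - g ` {..<n}. dotp K x p \<noteq> 0} \<union> {p \<in> g ` {..<n}. dotp K x p \<noteq> 0})"
    using G by (intro arg_cong[where f = card]) auto
  also have "\<dots> =
      card {p \<in> P - g ` {..<n}. dotp K x p \<noteq> 0} + card {p \<in> g ` {..<n}. dotp K x p \<noteq> 0}"
    by (rule card_Un_disjoint) (simp_all add: fin, blast)
  finally have "card {p \<in> P. dotp K x p \<noteq> 0} =
      card {p \<in> P - g ` {..<n}. dotp K x p \<noteq> 0} + card {p \<in> g ` {..<n}. dotp K x p \<noteq> 0}" .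
  moreover have "wt (encode N ps K x) = card {p \<in> P - g ` {..<n}. dotp K x p \<noteq> 0}"
    using ps wt_encode[of ps N K x] by (simp add: bij_betw_def)
  ultimately show ?thesis
    using card_proj_reps_dotp_nonzero[OF reps x] wt_encode[OF assms(2)] by simp
qed

lemma simplex_compl_minwt_maxwt:
  fixes g ps :: "nat \<Rightarrow> nat \<Rightarrow> 'a::{field,finite}"
  assumes gen: "is_gen_matrix n g k" and proj: "projective n g" and "0 < n" "k < K"
    and simplex: "simplex_compl_cols n g K N ps"
    and small: "maxwt (gen_code n g k) < CARD('a) ^ (K - 1)"
  shows "minwt (gen_code N ps K) = CARD('a) ^ (K - 1) - maxwt (gen_code n g k)"
    and "maxwt (gen_code N ps K) = CARD('a) ^ (K - 1)"
proof -
  define w where "w = maxwt (gen_code n g k)"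
  have g_Fn: "\<forall>j<n. g j \<in> Fn k" using gen by (simp add: is_gen_matrix_def)
  have wt_eq: "wt (encode N ps K x) = CARD('a) ^ (K - 1) - wt (encode n g k x)"
    if "x \<in> Fn K" "x \<noteq> 0" for x
    using wt_simplex_compl[OF simplex projective_inj[OF proj] that]
      encode_truncate[OF g_Fn less_imp_le[OF \<open>k < K\<close>]] by simp
  have wt_le: "wt (encode n g k x) \<le> w" for x
    unfolding w_def by (rule wt_le_maxwt[OF finite_gen_code encode_in_gen_code])
  have bounds: "CARD('a) ^ (K - 1) - w \<le> wt c \<and> wt c \<le> CARD('a) ^ (K - 1)"
    if c: "c \<in> gen_code N ps K - {0}" for c
  proof -
    obtain x where "x \<in> Fn K" "c = encode N ps K x" using c unfolding gen_code_eq_image by blast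
    moreover from this have "x \<noteq> 0" using c by auto
    ultimately show ?thesis using wt_eq wt_le by (simp add: diff_le_mono2)
  qed
  have unit_k: "unit_vec k \<in> Fn K" "unit_vec k \<noteq> 0"
    using \<open>k < K\<close> by (simp_all add: unit_vec_in_Fn)
  have max_wt: "wt (encode N ps K (unit_vec k)) = CARD('a) ^ (K - 1)"
    using wt_eq[OF unit_k] by (simp add: encode_unit_vec_beyond)
  have "0 < CARD('a) ^ (K - 1)" by simp
  with max_wt have max_in: "encode N ps K (unit_vec k) \<in> gen_code N ps K - {0}"
    by (intro DiffI encode_in_gen_code) auto
  have "gen_code n g k - {0} \<noteq> {}"
    using gen_code_has_nonzero[of 0 n g k] g_Fn \<open>0 < n\<close> proj by (simp add: projective_def)
  then obtain c where c: "c \<in> gen_code n g k - {0}" "wt c = w"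
    unfolding w_def by (rule maxwt_attained[OF finite_gen_code])
  then have "c \<in> encode n g k ` Fn k" by (simp add: gen_code_eq_image)
  then obtain x where x: "c = encode n g k x" "x \<in> Fn k" by (rule imageE)
  have "x \<in> Fn K" "x \<noteq> 0"
    using x c Fn_mono[of k K] \<open>k < K\<close> by auto
  then have min_wt: "wt (encode N ps K x) = CARD('a) ^ (K - 1) - w"
    using wt_eq x c by simp
  then have min_in: "encode N ps K x \<in> gen_code N ps K - {0}"
    using small by (intro DiffI encode_in_gen_code) (auto simp: w_def)
  show "minwt (gen_code N ps K) = CARD('a) ^ (K - 1) - maxwt (gen_code n g k)"
    and "maxwt (gen_code N ps K) = CARD('a) ^ (K - 1)"
    using minwt_maxwt_eqI[OF bounds min_in min_wt max_in max_wt] by (simp_all add: w_def)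
qed

lemma wt_eq_sum_of_bool:
  assumes "finite S" "{i. v i \<noteq> 0} \<subseteq> S"
  shows "wt v = (\<Sum>i\<in>S. of_bool (v i \<noteq> 0))"
proof -
  have "S \<inter> {i. v i \<noteq> 0} = {i. v i \<noteq> 0}" using assms(2) by blast
  then show ?thesis using assms(1) by (simp add: wt_def)
qed

lemma card_nonzero_diff_scl:
  fixes a b :: "'a::{field,finite}"
  assumes "a \<noteq> 0"
  shows "(\<Sum>l\<in>UNIV - {0}. of_bool (a - l * b \<noteq> 0)) + of_bool (b \<noteq> 0) = CARD('a) - 1"
proof (cases "b = 0")
  case True
  then show ?thesis using assms by (simp add: card_Diff_singleton)
next
  case False
  then have "(UNIV - {0}) \<inter> {l. a - l * b \<noteq> 0} = UNIV - {0, a / b}"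
    by (auto simp: field_simps)
  moreover have "a / b \<noteq> 0" using assms False by simp
  ultimately show ?thesis
    using False two_le_card_field[where 'a = 'a] by (simp add: card_Diff_subset)
qed

lemma sum_wt_diff_scl:
  fixes c c' :: "nat \<Rightarrow> 'a::{field,finite}"
  assumes fin: "finite {i. c i \<noteq> 0}" and supp: "{i. c' i \<noteq> 0} \<subseteq> {i. c i \<noteq> 0}"
  shows "(\<Sum>l\<in>UNIV - {0}. wt (c - scl l c')) + wt c' = (CARD('a) - 1) * wt c"
proof -
  define S where "S = {i. c i \<noteq> 0}"
  have fin_S: "finite S" using fin by (simp add: S_def)
  have "wt (c - scl l c') = (\<Sum>i\<in>S. of_bool (c i - l * c' i \<noteq> 0))" for l
  proof -
    have "{i. (c - scl l c') i \<noteq> 0} \<subseteq> S" using supp by (auto simp: S_def scl_def)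
    from wt_eq_sum_of_bool[OF fin_S this] show ?thesis
      by (simp add: scl_def fun_diff_def del: sum_of_bool_eq)
  qed
  moreover have "wt c' = (\<Sum>i\<in>S. of_bool (c' i \<noteq> 0))"
    using wt_eq_sum_of_bool[OF fin_S] supp by (simp add: S_def del: sum_of_bool_eq)
  ultimately have "(\<Sum>l\<in>UNIV - {0}. wt (c - scl l c')) + wt c' =
      (\<Sum>i\<in>S. (\<Sum>l\<in>UNIV - {0}. of_bool (c i - l * c' i \<noteq> 0)) + of_bool (c' i \<noteq> 0))"
    by (simp only: sum.swap[of _ "UNIV - {0}"] sum.distrib)
  also have "\<dots> = (\<Sum>i\<in>S. CARD('a) - 1)"
    by (rule sum.cong[OF refl], rule card_nonzero_diff_scl) (simp add: S_def)
  finally show ?thesis by (simp add: wt_def S_def)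
qed

lemma minimal_code_if_Ashikhmin_Barg:
  fixes D :: "(nat \<Rightarrow> 'a::{field,finite}) set"
  assumes subspace: "fv.subspace D" and D_Fn: "D \<subseteq> Fn N"
    and AB: "(CARD('a) - 1) * maxwt D < CARD('a) * minwt D"
  shows "minimal_code D"
  unfolding minimal_code_def
proof (intro ballI impI)
  fix c c' assume c: "c \<in> D - {0}" and c': "c' \<in> D - {0}"
    and supp: "{i. c' i \<noteq> 0} \<subseteq> {i. c i \<noteq> 0}"
  show "\<exists>t. c' = scl t c"
  proof (rule ccontr)
    assume not_multiple: "\<nexists>t. c' = scl t c"
    have fin: "finite D" using D_Fn finite_Fn by (rule finite_subset)
    have "minwt D \<le> wt (c - scl l c')" if "l \<in> UNIV - {0}" for l
    proof (rule minwt_le_wt[OF fin])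
      have "c - scl l c' \<noteq> 0"
      proof
        assume "c - scl l c' = 0"
        then have "c' = scl (1 / l) c" using that by (simp add: scl_def fun_eq_iff)
        then show False using not_multiple by blast
      qed
      then show "c - scl l c' \<in> D - {0}"
        using subspace c c' by (simp add: fv.subspace_diff fv.subspace_scale)
    qed
    then have "(\<Sum>l\<in>UNIV - {0::'a}. minwt D) \<le> (\<Sum>l\<in>UNIV - {0}. wt (c - scl l c'))"
      by (rule sum_mono)
    then have sum_ge: "(CARD('a) - 1) * minwt D \<le> (\<Sum>l\<in>UNIV - {0}. wt (c - scl l c'))"
      by (simp add: card_Diff_singleton)
    have "(CARD('a) - 1) * minwt D + minwt D \<le> (\<Sum>l\<in>UNIV - {0}. wt (c - scl l c')) + wt c'"
      using sum_ge minwt_le_wt[OF fin c'] by (rule add_mono)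
    also have "\<dots> = (CARD('a) - 1) * wt c"
      using c D_Fn supp by (intro sum_wt_diff_scl finite_support_Fn) auto
    also have "\<dots> \<le> (CARD('a) - 1) * maxwt D"
      using wt_le_maxwt[OF fin] c by simp
    finally have "(CARD('a) - 1) * minwt D + minwt D \<le> (CARD('a) - 1) * maxwt D" .
    then show False
      using AB two_le_card_field[where 'a = 'a] by (simp add: algebra_simps)
  qed
qed

definition lincomb :: "nat \<Rightarrow> (nat \<Rightarrow> nat \<Rightarrow> 'a::field) \<Rightarrow> (nat \<Rightarrow> 'a) \<Rightarrow> nat \<Rightarrow> 'a" where
  "lincomb K r x = (\<lambda>j. \<Sum>i<K. x i * r i j)"

lemma row_code_eq_range: "row_code K r = range (lincomb K r)"
  by (auto simp: row_code_def lincomb_def)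

lemma sum_fun_apply: "(\<Sum>i\<in>I. f i) j = (\<Sum>i\<in>I. f i j)"
  by (induction I rule: infinite_finite_induct) auto

lemma lincomb_eq_sum_scl: "lincomb K r x = (\<Sum>i<K. scl (x i) (r i))"
  by (simp add: lincomb_def scl_def sum_fun_apply fun_eq_iff)

lemma lincomb_cong: "(\<And>i. i < K \<Longrightarrow> x i = y i) \<Longrightarrow> lincomb K r x = lincomb K r y"
  by (simp add: lincomb_def)

lemma lincomb_unit_vec:
  assumes "i < K"
  shows "lincomb K r (unit_vec i) = r i"
proof
  fix j
  have "lincomb K r (unit_vec i) j = (\<Sum>l<K. if l = i then r l j else 0)"
    unfolding lincomb_def by (intro sum.cong) auto
  with assms show "lincomb K r (unit_vec i) j = r i j" by simp
qed

lemma sum_scl_image_eq_lincomb: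
  "inj_on r {..<K} \<Longrightarrow> (\<Sum>v\<in>r ` {..<K}. scl (u v) v) = lincomb K r (\<lambda>i. u (r i))"
  by (simp add: sum.reindex lincomb_eq_sum_scl)

lemma lincomb_in_span: "lincomb K r x \<in> fv.span (r ` {..<K})"
  unfolding lincomb_eq_sum_scl by (intro fv.span_sum fv.span_scale fv.span_base) auto

lemma span_eq_range_lincomb:
  assumes inj: "inj_on r {..<K}"
  shows "fv.span (r ` {..<K}) = range (lincomb K r)"
proof (intro equalityI subsetI)
  fix v assume "v \<in> fv.span (r ` {..<K})"
  then obtain u where "v = (\<Sum>w\<in>r ` {..<K}. scl (u w) w)"
    by (auto simp: fv.span_finite)
  then show "v \<in> range (lincomb K r)"
    using sum_scl_image_eq_lincomb[OF inj] by auto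
qed (auto intro: lincomb_in_span)

lemma lincomb_eq_0_iff:
  assumes inj: "inj_on r {..<K}" and indep: "fv.independent (r ` {..<K})"
  shows "lincomb K r x = 0 \<longleftrightarrow> (\<forall>i<K. x i = 0)"
proof
  assume zero: "lincomb K r x = 0"
  define u where "u v = x (the_inv_into {..<K} r v)" for v
  have "lincomb K r (\<lambda>i. u (r i)) = lincomb K r x"
    by (rule lincomb_cong) (simp add: u_def the_inv_into_f_f[OF inj])
  then have "(\<Sum>v\<in>r ` {..<K}. scl (u v) v) = 0"
    using zero sum_scl_image_eq_lincomb[OF inj] by simp
  then have "u (r i) = 0" if "i < K" for i
    using fv.independentD[OF indep] that by blast
  then show "\<forall>i<K. x i = 0"
    by (simp add: u_def the_inv_into_f_f[OF inj])
qed (simp add: lincomb_def fun_eq_iff)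

lemma independent_if_lincomb_eq_0:
  assumes inj: "inj_on r {..<K}" and zero: "\<And>x. lincomb K r x = 0 \<Longrightarrow> \<forall>i<K. x i = 0"
  shows "fv.independent (r ` {..<K})"
proof (rule fv.independent_if_scalars_zero)
  fix u v assume "(\<Sum>v\<in>r ` {..<K}. scl (u v) v) = 0" "v \<in> r ` {..<K}"
  then show "u v = 0"
    using zero[of "\<lambda>i. u (r i)"] sum_scl_image_eq_lincomb[OF inj] by auto
qed simp

lemma dim_span_rows:
  "inj_on r {..<K} \<Longrightarrow> fv.independent (r ` {..<K}) \<Longrightarrow> fv.dim (fv.span (r ` {..<K})) = K"
  unfolding fv.dim_span by (simp add: fv.dim_eq_card_independent card_image)

lemma cat_shift [simp]: "cat m u v (j + m) = v j"
  by (simp add: cat_def)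

lemma wt_cat:
  assumes "finite {i. v i \<noteq> 0}"
  shows "wt (cat m u v) = card {j. j < m \<and> u j \<noteq> 0} + wt v"
proof -
  have "j \<in> {j. cat m u v j \<noteq> 0} \<longleftrightarrow> j \<in> {j. j < m \<and> u j \<noteq> 0} \<union> (\<lambda>l. l + m) ` {l. v l \<noteq> 0}"
    for j
  proof (cases "j < m")
    case False
    then have "j = (j - m) + m" by simp
    then show ?thesis using False by (auto simp: cat_def image_iff)
  qed (auto simp: cat_def)
  then have "{j. cat m u v j \<noteq> 0} = {j. j < m \<and> u j \<noteq> 0} \<union> (\<lambda>l. l + m) ` {l. v l \<noteq> 0}"
    by blast
  moreover have "{j. j < m \<and> u j \<noteq> 0} \<inter> (\<lambda>l. l + m) ` {l. v l \<noteq> 0} = {}" by auto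
  ultimately show ?thesis
    using assms by (simp add: wt_def card_Un_disjoint card_image)
qed

definition extension_rows :: "nat \<Rightarrow> (nat \<Rightarrow> 'a::field) \<Rightarrow> (nat \<Rightarrow> nat \<Rightarrow> 'a) \<Rightarrow> nat \<Rightarrow> nat \<Rightarrow> 'a" where
  "extension_rows n' a r = (\<lambda>i. if i = 0 then cat n' a (r 0) else cat n' 0 (r i))"

lemma extension_code_eq_row_code: "extension_code n' a r K = row_code K (extension_rows n' a r)"
  by (simp add: extension_code_def extension_rows_def)

lemma lincomb_extension_rows:
  assumes "0 < K"
  shows "lincomb K (extension_rows n' a r) x = cat n' (scl (x 0) a) (lincomb K r x)"
proof
  fix j
  show "lincomb K (extension_rows n' a r) x j = cat n' (scl (x 0) a) (lincomb K r x) j"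
  proof (cases "j < n'")
    case True
    then have "lincomb K (extension_rows n' a r) x j = (\<Sum>i<K. if i = 0 then x 0 * a j else 0)"
      unfolding lincomb_def by (intro sum.cong) (auto simp: extension_rows_def cat_def)
    then show ?thesis using True assms by (simp add: cat_def scl_def)
  qed (auto simp: lincomb_def extension_rows_def cat_def intro!: sum.cong)
qed

locale code_extension =
  fixes D :: "(nat \<Rightarrow> 'a::{field,finite}) set" and N K n' :: nat
    and r :: "nat \<Rightarrow> nat \<Rightarrow> 'a" and a :: "nat \<Rightarrow> 'a"
  assumes code_Fn: "D \<subseteq> Fn N"
    and basis: "ext_basis D K r"
    and two_le_dim: "2 \<le> K"
    and a_nonzero: "\<forall>j<n'. a j \<noteq> 0"
begin

lemma rows_inj: "inj_on r {..<K}"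
  and rows_independent: "fv.independent (r ` {..<K})"
  and span_rows: "fv.span (r ` {..<K}) = D"
  and wt_row_0: "wt (r 0) = maxwt D"
  and wt_row_1: "wt (r 1) = minwt D"
  using basis by (simp_all add: ext_basis_def)

lemma subspace_code: "fv.subspace D"
  using fv.subspace_span span_rows by blast

lemma dim_code: "fv.dim D = K"
  using dim_span_rows[OF rows_inj rows_independent] span_rows by simp

lemma finite_code: "finite D"
  using code_Fn finite_Fn by (rule finite_subset)

lemma lincomb_in_code: "lincomb K r x \<in> D"
  using lincomb_in_span span_rows by blast

lemma lincomb_rows_eq_0_iff: "lincomb K r x = 0 \<longleftrightarrow> (\<forall>i<K. x i = 0)"
  by (rule lincomb_eq_0_iff[OF rows_inj rows_independent])

definition ext_word :: "(nat \<Rightarrow> 'a) \<Rightarrow> nat \<Rightarrow> 'a" where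
  "ext_word x = cat n' (scl (x 0) a) (lincomb K r x)"

lemma lincomb_extension_rows_eq: "lincomb K (extension_rows n' a r) x = ext_word x"
  using two_le_dim by (simp add: ext_word_def lincomb_extension_rows)

lemma extension_code_eq_range: "extension_code n' a r K = range ext_word"
  by (simp add: extension_code_eq_row_code row_code_eq_range lincomb_extension_rows_eq)

lemma ext_word_cong: "(\<And>i. i < K \<Longrightarrow> x i = y i) \<Longrightarrow> ext_word x = ext_word y"
  using two_le_dim lincomb_cong[of K x y r] by (simp add: ext_word_def)

lemma ext_word_scale: "ext_word (\<lambda>i. t * x i) = scl t (ext_word x)"
  by (simp add: ext_word_def lincomb_def scl_def cat_def fun_eq_iff sum_distrib_left mult.assoc)

lemma ext_word_eq_0_iff: "ext_word x = 0 \<longleftrightarrow> lincomb K r x = 0"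
proof
  assume "ext_word x = 0"
  then show "lincomb K r x = 0"
    by (metis cat_shift ext_word_def ext zero_fun_def)
next
  assume "lincomb K r x = 0"
  moreover have "x 0 = 0" using calculation two_le_dim by (simp add: lincomb_rows_eq_0_iff)
  ultimately show "ext_word x = 0" by (simp add: ext_word_def cat_def scl_def fun_eq_iff)
qed

lemma wt_ext_word: "wt (ext_word x) = (if x 0 = 0 then 0 else n') + wt (lincomb K r x)"
proof -
  have fin: "finite {l. lincomb K r x l \<noteq> 0}"
    using lincomb_in_code code_Fn finite_support_Fn by blast
  have "{j. j < n' \<and> scl (x 0) a j \<noteq> 0} = (if x 0 = 0 then {} else {..<n'})"
    using a_nonzero by (auto simp: scl_def)
  then show ?thesis
    by (simp add: ext_word_def wt_cat[OF fin])
qed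

lemma extension_code_subset_Fn: "extension_code n' a r K \<subseteq> Fn (N + n')"
proof
  fix c assume "c \<in> extension_code n' a r K"
  then obtain x where c: "c = ext_word x" by (auto simp: extension_code_eq_range)
  have "lincomb K r x \<in> Fn N" using lincomb_in_code code_Fn by blast
  then show "c \<in> Fn (N + n')"
    by (auto simp: c ext_word_def cat_def Fn_def)
qed

lemma extension_rows_inj: "inj_on (extension_rows n' a r) {..<K}"
proof (rule inj_onI)
  fix i j assume "i \<in> {..<K}" "j \<in> {..<K}" "extension_rows n' a r i = extension_rows n' a r j"
  moreover from this have "r i = r j"
    by (metis ext cat_shift extension_rows_def)
  ultimately show "i = j" using rows_inj by (auto dest: inj_onD)
qed

lemma extension_rows_independent: "fv.independent (extension_rows n' a r ` {..<K})"
proof (rule independent_if_lincomb_eq_0[OF extension_rows_inj])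
  fix x assume "lincomb K (extension_rows n' a r) x = 0"
  then show "\<forall>i<K. x i = 0"
    by (simp add: lincomb_extension_rows_eq ext_word_eq_0_iff lincomb_rows_eq_0_iff)
qed

lemma extension_code_eq_span: "extension_code n' a r K = fv.span (extension_rows n' a r ` {..<K})"
  by (simp add: extension_code_eq_row_code row_code_eq_range span_eq_range_lincomb[OF extension_rows_inj])

lemma subspace_extension_code: "fv.subspace (extension_code n' a r K)"
  by (simp add: extension_code_eq_span)

lemma dim_extension_code: "fv.dim (extension_code n' a r K) = K"
  unfolding extension_code_eq_span
  by (rule dim_span_rows[OF extension_rows_inj extension_rows_independent])

lemma minwt_maxwt_extension_code:
  shows "minwt (extension_code n' a r K) = minwt D"
    and "maxwt (extension_code n' a r K) = maxwt D + n'"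
proof -
  have bounds: "minwt D \<le> wt c \<and> wt c \<le> maxwt D + n'"
    if c_in: "c \<in> extension_code n' a r K - {0}" for c
  proof -
    obtain x where c: "c = ext_word x" using c_in by (auto simp: extension_code_eq_range)
    then have "lincomb K r x \<in> D - {0}"
      using c_in lincomb_in_code ext_word_eq_0_iff by auto
    then have "minwt D \<le> wt (lincomb K r x)" "wt (lincomb K r x) \<le> maxwt D"
      using minwt_le_wt[OF finite_code] wt_le_maxwt[OF finite_code] by auto
    then show ?thesis by (simp add: c wt_ext_word)
  qed
  have "r i \<noteq> 0" if "i < K" for i
  proof
    assume "r i = 0"
    then have "0 \<in> r ` {..<K}" using that by (metis image_eqI lessThan_iff)
    then show False by (rule notE[OF rows_independent fv.dependent_zero])
  qed
  then have "ext_word (unit_vec i) \<in> extension_code n' a r K - {0}" if "i < K" for i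
    using that by (simp add: lincomb_unit_vec extension_code_eq_range ext_word_eq_0_iff)
  then have in_0: "ext_word (unit_vec 0) \<in> extension_code n' a r K - {0}"
    and in_1: "ext_word (unit_vec 1) \<in> extension_code n' a r K - {0}"
    using two_le_dim by simp_all
  have wt_0: "wt (ext_word (unit_vec 0)) = maxwt D + n'"
    using two_le_dim by (simp add: wt_ext_word lincomb_unit_vec wt_row_0)
  have wt_1: "wt (ext_word (unit_vec 1)) = minwt D"
    using lincomb_unit_vec[of 1 K r] two_le_dim wt_row_1 by (simp add: wt_ext_word)
  show "minwt (extension_code n' a r K) = minwt D" "maxwt (extension_code n' a r K) = maxwt D + n'"
    using minwt_maxwt_eqI[OF bounds in_1 wt_1 in_0 wt_0] by simp_all
qed

lemma minimal_extension_code: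
  assumes "minimal_code D"
  shows "minimal_code (extension_code n' a r K)"
  unfolding minimal_code_def
proof (intro ballI impI)
  fix c c' assume c: "c \<in> extension_code n' a r K - {0}" and c': "c' \<in> extension_code n' a r K - {0}"
    and supp: "{i. c' i \<noteq> 0} \<subseteq> {i. c i \<noteq> 0}"
  obtain x x' where x: "c = ext_word x" and x': "c' = ext_word x'"
    using c c' by (auto simp: extension_code_eq_range)
  have in_D: "lincomb K r x \<in> D - {0}" "lincomb K r x' \<in> D - {0}"
    using c c' x x' lincomb_in_code ext_word_eq_0_iff by auto
  have supp_D: "{l. lincomb K r x' l \<noteq> 0} \<subseteq> {l. lincomb K r x l \<noteq> 0}"
  proof
    fix l assume "l \<in> {l. lincomb K r x' l \<noteq> 0}"
    then have "c' (l + n') \<noteq> 0" by (simp add: x' ext_word_def)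
    then have "c (l + n') \<noteq> 0" using supp by blast
    then show "l \<in> {l. lincomb K r x l \<noteq> 0}" by (simp add: x ext_word_def)
  qed
  obtain t where t: "lincomb K r x' = scl t (lincomb K r x)"
    using assms[unfolded minimal_code_def, rule_format, OF in_D supp_D] by blast
  have "lincomb K r (\<lambda>i. x' i - t * x i) = 0"
    using t by (simp add: lincomb_def scl_def fun_eq_iff algebra_simps sum_subtractf sum_distrib_left)
  then have "\<forall>i<K. x' i = t * x i" by (simp add: lincomb_rows_eq_0_iff)
  then have "c' = scl t c"
    unfolding x x' ext_word_scale[symmetric] by (intro ext_word_cong) simp
  then show "\<exists>t. c' = scl t c" ..
qed

end

lemma less_power_if_log_less:
  fixes b w e :: nat
  assumes "1 < b" "log b w < e"
  shows "w < b ^ e"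
proof (rule ccontr)
  assume "\<not> w < b ^ e"
  then have "real b ^ e \<le> real w" by (simp flip: of_nat_power)
  then have "e \<le> log b w" using assms(1) by (intro le_log_of_power) simp_all
  then show False using assms(2) by simp
qed

lemma Ashikhmin_Barg_if_less_power:
  fixes q w e :: nat
  assumes "0 < q" "w < q ^ e"
  shows "(q - 1) * q ^ Suc e < q * (q ^ Suc e - w)"
proof -
  have "q * w < q * q ^ e" "q * q ^ e \<le> q * (q * q ^ e)" using assms by simp_all
  moreover have "(q - 1) * q ^ Suc e = q * (q * q ^ e) - q * q ^ e"
    and "q * (q ^ Suc e - w) = q * (q * q ^ e) - q * w"
    by (simp_all add: diff_mult_distrib diff_mult_distrib2)
  ultimately show ?thesis by linarith
qed

lemma extension_length:
  fixes q m M :: nat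
  assumes q: "2 \<le> q" and AB: "(q - 1) * M < q * m"
  defines "n' \<equiv> nat (\<lceil>real q * real m / (real q - 1)\<rceil> - int M)"
  shows "1 \<le> n'" and "\<not> real m / real (M + n') > (real q - 1) / real q"
proof -
  define X where "X = real q * real m / (real q - 1)"
  have q1: "0 < real q - 1" using q by simp
  have "real ((q - 1) * M) < real (q * m)" using AB by (simp only: of_nat_less_iff)
  then have "(real q - 1) * real M < real q * real m" using q by (simp add: of_nat_diff)
  then have "real M < X" using q1 by (simp add: X_def pos_less_divide_eq mult.commute)
  then have M_less: "int M < \<lceil>X\<rceil>" using le_of_int_ceiling[of X] by linarith
  then show "1 \<le> n'" by (simp add: n'_def X_def)
  have "real (M + n') = of_int \<lceil>X\<rceil>" using M_less by (simp add: n'_def X_def)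
  then have "X \<le> real (M + n')" by (simp add: le_of_int_ceiling)
  then have "real q * real m \<le> (real q - 1) * real (M + n')"
    using q1 by (simp add: X_def divide_le_eq mult.commute)
  moreover have "0 < real (M + n')" using \<open>real M < X\<close> \<open>X \<le> real (M + n')\<close> by linarith
  ultimately show "\<not> real m / real (M + n') > (real q - 1) / real q"
    using q by (simp add: divide_simps mult.commute)
qed

theorem corollary3p1:
  fixes g :: "nat \<Rightarrow> nat \<Rightarrow> 'a::{field,finite}"
    and ps r :: "nat \<Rightarrow> nat \<Rightarrow> 'a"
    and a :: "nat \<Rightarrow> 'a"
    and n k h w K N n' :: nat
    and C1 C' :: "(nat \<Rightarrow> 'a) set"
  defines "q \<equiv> card (UNIV :: 'a set)"
  assumes n_pos: "n \<ge> 1"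
    and gen: "is_gen_matrix n g k"
    and proj: "projective n g"
    and w_def: "w = maxwt (gen_code n g k)"
    and h_pos: "h > 0"
    and h_bound: "real h > log (real q) (real w) - real k + 2"
    and K_def: "K = k + h"
    and simplex: "simplex_compl_cols n g K N ps"
    and C1_def: "C1 = gen_code N ps K"
    and n'_def: "n' = nat (\<lceil>real q * real (q ^ (K - 1) - w) / (real q - 1)\<rceil> - int (q ^ (K - 1)))"
    and basis: "ext_basis C1 K r"
    and a_nz: "\<forall>j<n'. a j \<noteq> 0"
    and C'_def: "C' = extension_code n' a r K"
  shows "N = (q ^ K - 1) div (q - 1) - n \<and> fv.dim C1 = K \<and>
         minwt C1 = q ^ (K - 1) - w \<and> maxwt C1 = q ^ (K - 1) \<and>
         n' \<ge> 1 \<and>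
         C' \<subseteq> Fn (N + n') \<and> fv.subspace C' \<and> fv.dim C' = K \<and>
         minwt C' = q ^ (K - 1) - w \<and> maxwt C' = q ^ (K - 1) + n' \<and>
         minimal_code C' \<and>
         \<not> (real (minwt C') / real (maxwt C') > (real q - 1) / real q)"
proof -
  have q: "2 \<le> q" unfolding q_def by (rule two_le_card_field)
  have "g 0 \<in> Fn k" "g 0 \<noteq> 0"
    using gen proj n_pos by (simp_all add: is_gen_matrix_def projective_def)
  then obtain i where "i < k" by (rule nonzero_coord_Fn)
  then have K: "2 \<le> K" using h_pos K_def by simp
  have "log q w < real (K - 2)" using h_bound K_def K by (simp add: of_nat_diff)
  then have "w < q ^ (K - 2)" using q by (intro less_power_if_log_less) simp_all
  then have AB: "(q - 1) * q ^ (K - 1) < q * (q ^ (K - 1) - w)"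
    using Ashikhmin_Barg_if_less_power[of q w "K - 2"] q K by (simp add: Suc_diff_Suc numeral_2_eq_2)
  then have "w < q ^ (K - 1)" by (cases "w < q ^ (K - 1)") simp_all
  then have C1_wt: "minwt C1 = q ^ (K - 1) - w" "maxwt C1 = q ^ (K - 1)"
    using simplex_compl_minwt_maxwt[OF gen proj _ _ simplex] n_pos K_def h_pos
    by (simp_all add: C1_def w_def q_def)
  interpret code_extension C1 N K n' r a
    using gen_code_subset_Fn basis K a_nz by unfold_locales (simp_all add: C1_def)
  have "minimal_code C1"
    using minimal_code_if_Ashikhmin_Barg[OF subspace_code code_Fn] AB C1_wt by (simp add: q_def)
  moreover have "1 \<le> n'" "\<not> real (q ^ (K - 1) - w) / real (q ^ (K - 1) + n') > (real q - 1) / real q"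
    unfolding n'_def by (fact extension_length[OF q AB])+
  ultimately show ?thesis
    using simplex_compl_length[OF simplex projective_inj[OF proj]] C1_wt dim_code
      extension_code_subset_Fn subspace_extension_code dim_extension_code
      minwt_maxwt_extension_code minimal_extension_code
    by (simp add: C'_def q_def)
qed

end
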